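(* Let $\Bbbk$ be a field, $A$ a $\Bbbk$-algebra, $\Gamma$ a subalgebra, $\sim$ an equivalence relation on $\mathrm{cfs}(\Gamma)$, and suppose $\Gamma$ is a Harish-Chandra block subalgebra of $A$ with respect to $\sim$. Let $V$ be an $A$-module and $\mathcal D\subseteq\mathrm{cfs}(\Gamma)/{\sim}$. Then $$A.\Big(\bigoplus_{B\in\mathcal D}V(B)\Big)\subseteq\bigoplus_{C\succ\mathcal D}V(C),$$ where $C\succ\mathcal D$ means $B\prec C$ for some $B\in\mathcal D$.
   Context: $\mathrm{cfs}(\Gamma)$: maximal two-sided ideals $\mathfrak m$ of $\Gamma$ with $\dim\Gamma/\mathfrak m<\infty$. For a class $B$, $\mathcal W(B)=\{\mathfrak m_1\cdots\mathfrak m_k:k\ge0,\mathfrak m_i\in B\}$. For a $\Gamma$-module $V$, $V(B)=\{v\in V:\mathfrak m v=0$ for some $\mathfrak m\in\mathcal W(B)\}$ (the sum of these is direct); $V$ is a block module if $V=\bigoplus_B V(B)$, and $\mathrm{Supp}(V)=\{B:V(B)\ne0\}$. $\Gamma$ is a Harish-Chandra block subalgebra of $A$ if $A/A\mathfrak m$ is a block module over $\Gamma$ for every $B$ and $\mathfrak m\in\mathcal W(B)$. $\prec$ is the preorder on $\mathrm{cfs}(\Gamma)/{\sim}$ generated by $B\prec C$ whenever $C\in\mathrm{Supp}(A/A\mathfrak m)$ for some $\mathfrak m\in B$. *)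

theory Defs
  imports Main "HOL.Vector_Spaces"
begin

definition k_algebra :: "('k::field \<Rightarrow> 'a::ring_1 \<Rightarrow> 'a) \<Rightarrow> bool" where
  "k_algebra scale \<longleftrightarrow> vector_space scale \<and>
     (\<forall>c x y. scale c (x * y) = scale c x * y \<and> scale c (x * y) = x * scale c y)"

definition subalgebra :: "('k::field \<Rightarrow> 'a::ring_1 \<Rightarrow> 'a) \<Rightarrow> 'a set \<Rightarrow> bool" where
  "subalgebra scale G \<longleftrightarrow> 1 \<in> G \<and> 0 \<in> G \<and>
     (\<forall>x\<in>G. \<forall>y\<in>G. x + y \<in> G \<and> x - y \<in> G \<and> x * y \<in> G) \<and>
     (\<forall>c. \<forall>x\<in>G. scale c x \<in> G)"

definition two_sided_ideal :: "'a::ring_1 set \<Rightarrow> 'a set \<Rightarrow> bool" where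
  "two_sided_ideal G I \<longleftrightarrow> I \<subseteq> G \<and> 0 \<in> I \<and>
     (\<forall>x\<in>I. \<forall>y\<in>I. x + y \<in> I \<and> x - y \<in> I) \<and>
     (\<forall>g\<in>G. \<forall>x\<in>I. g * x \<in> I \<and> x * g \<in> I)"

definition finite_codim :: "('k::field \<Rightarrow> 'a::ring_1 \<Rightarrow> 'a) \<Rightarrow> 'a set \<Rightarrow> 'a set \<Rightarrow> bool" where
  "finite_codim scale G I \<longleftrightarrow> (\<exists>S. finite S \<and> S \<subseteq> G \<and>
     (\<forall>x\<in>G. \<exists>c. x - (\<Sum>s\<in>S. scale (c s) s) \<in> I))"

definition cfs :: "('k::field \<Rightarrow> 'a::ring_1 \<Rightarrow> 'a) \<Rightarrow> 'a set \<Rightarrow> 'a set set" where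
  "cfs scale G = {m. two_sided_ideal G m \<and> m \<noteq> G \<and>
     (\<forall>J. two_sided_ideal G J \<and> m \<subseteq> J \<longrightarrow> J = m \<or> J = G) \<and> finite_codim scale G m}"

definition ideal_mult :: "'a::ring_1 set \<Rightarrow> 'a set \<Rightarrow> 'a set" where
  "ideal_mult I J = {(\<Sum>i<n. x i * y i) | (n::nat) x y. \<forall>i<n. x i \<in> I \<and> y i \<in> J}"

inductive_set words :: "'a::ring_1 set \<Rightarrow> 'a set set \<Rightarrow> 'a set set" for G B where
  words_unit: "G \<in> words G B"
| words_step: "I \<in> words G B \<Longrightarrow> m \<in> B \<Longrightarrow> ideal_mult I m \<in> words G B"

text \<open>For the G-module V/N (action act, N a submodule), the B-part
  V(B) = {v. m v = 0 (mod N) for some m in W(B)} (as a set of representatives).\<close>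
definition block_part :: "('a::ring_1 \<Rightarrow> 'v::ab_group_add \<Rightarrow> 'v) \<Rightarrow> 'v set \<Rightarrow> 'a set \<Rightarrow> 'a set set \<Rightarrow> 'v set" where
  "block_part act N G B = {v. \<exists>m\<in>words G B. \<forall>g\<in>m. act g v \<in> N}"

definition block_sum :: "('a::ring_1 \<Rightarrow> 'v::ab_group_add \<Rightarrow> 'v) \<Rightarrow> 'v set \<Rightarrow> 'a set \<Rightarrow> 'a set set set \<Rightarrow> 'v set" where
  "block_sum act N G Bs = {(\<Sum>B\<in>F. f B) | F f. finite F \<and> F \<subseteq> Bs \<and>
      (\<forall>B\<in>F. f B \<in> block_part act N G B)}"

definition block_module :: "('a::ring_1 \<Rightarrow> 'v::ab_group_add \<Rightarrow> 'v) \<Rightarrow> 'v set \<Rightarrow> 'a set \<Rightarrow> 'a set set set \<Rightarrow> bool" where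
  "block_module act N G Cl \<longleftrightarrow> (\<forall>v. \<exists>w\<in>block_sum act N G Cl. v - w \<in> N)"

definition Supp :: "('a::ring_1 \<Rightarrow> 'v::ab_group_add \<Rightarrow> 'v) \<Rightarrow> 'v set \<Rightarrow> 'a set \<Rightarrow> 'a set set set \<Rightarrow> 'a set set set" where
  "Supp act N G Cl = {B \<in> Cl. \<exists>v\<in>block_part act N G B. v \<notin> N}"

definition left_ideal_gen :: "'a::ring_1 set \<Rightarrow> 'a set" where
  "left_ideal_gen m = {(\<Sum>i<n. a i * g i) | (n::nat) a g. \<forall>i<n. g i \<in> m}"

definition classes :: "('k::field \<Rightarrow> 'a::ring_1 \<Rightarrow> 'a) \<Rightarrow> 'a set \<Rightarrow> ('a set \<times> 'a set) set \<Rightarrow> 'a set set set" where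
  "classes scale G R = cfs scale G // R"

definition HC_block_subalgebra :: "('k::field \<Rightarrow> 'a::ring_1 \<Rightarrow> 'a) \<Rightarrow> 'a set \<Rightarrow> ('a set \<times> 'a set) set \<Rightarrow> bool" where
  "HC_block_subalgebra scale G R \<longleftrightarrow>
     (\<forall>B\<in>classes scale G R. \<forall>m\<in>words G B.
        block_module (*) (left_ideal_gen m) G (classes scale G R))"

definition prec_step :: "('k::field \<Rightarrow> 'a::ring_1 \<Rightarrow> 'a) \<Rightarrow> 'a set \<Rightarrow> ('a set \<times> 'a set) set \<Rightarrow> ('a set set \<times> 'a set set) set" where
  "prec_step scale G R = {(B, C). B \<in> classes scale G R \<and> C \<in> classes scale G R \<and>
     (\<exists>m\<in>B. C \<in> Supp (*) (left_ideal_gen m) G (classes scale G R))}"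

definition prec :: "('k::field \<Rightarrow> 'a::ring_1 \<Rightarrow> 'a) \<Rightarrow> 'a set \<Rightarrow> ('a set \<times> 'a set) set \<Rightarrow> ('a set set \<times> 'a set set) set" where
  "prec scale G R = (prec_step scale G R)\<^sup>*"

definition A_module :: "('a::ring_1 \<Rightarrow> 'v::ab_group_add \<Rightarrow> 'v) \<Rightarrow> bool" where
  "A_module act \<longleftrightarrow> (\<forall>a b v w. act (a + b) v = act a v + act b v \<and>
     act a (v + w) = act a v + act a w \<and> act (a * b) v = act a (act b v) \<and> act 1 v = v)"

end

theory Submission
  imports Defs
begin

(*
  Write v as a sum of components v_B \<in> V(B), each annihilated by some word J \<in> W(B), and
  induct on J.  For J = I m, the block decomposition of A/AJ writes any a \<in> A modulo AJ
  as a sum of elements f_C \<in> (A/AJ)(C).  If C \<in> Supp(A/Am), then B \<prec> C and f_C v lies in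
  V(C).  Otherwise, since AJ \<subseteq> Am, the element f_C already lies in Am, so f_C v is a sum
  of terms b (x v) with x \<in> m, and x v is annihilated by the shorter word I.
*)

lemma sum_mem_closed:
  fixes M :: "'b::comm_monoid_add set"
  assumes "0 \<in> M" and "\<And>x y. x \<in> M \<Longrightarrow> y \<in> M \<Longrightarrow> x + y \<in> M"
    and "\<And>i. i \<in> F \<Longrightarrow> t i \<in> M"
  shows "sum t F \<in> M"
  using assms(3) by (induction F rule: infinite_finite_induct) (auto intro: assms(1,2))

lemma sum_lessThan_append:
  fixes m n :: nat
  shows "(\<Sum>i<m + n. if i < m then f i else g (i - m)) = (\<Sum>i<m. f i) + (\<Sum>i<n. g i)"
  by (induction n) (simp_all add: add.assoc)

lemma A_moduleD:
  assumes "A_module act"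
  shows "act (a + b) v = act a v + act b v" and "act a (v + w) = act a v + act a w"
    and "act (a * b) v = act a (act b v)" and "act 1 v = v"
  using assms unfolding A_module_def by blast+

lemma A_module_act_zero:
  assumes "A_module act"
  shows "act 0 v = 0" and "act a 0 = 0"
  using A_moduleD(1)[OF assms, of 0 0 v] A_moduleD(2)[OF assms, of a 0 0] by simp_all

lemma A_module_act_diff:
  assumes "A_module act"
  shows "act (a - b) v = act a v - act b v"
  using A_moduleD(1)[OF assms, of "a - b" b v] by (simp add: algebra_simps)

lemma A_module_act_sum_left:
  assumes "A_module act"
  shows "act (sum f F) v = (\<Sum>x\<in>F. act (f x) v)"
  by (induction F rule: infinite_finite_induct) (simp_all add: assms A_moduleD(1) A_module_act_zero)

lemma A_module_act_sum_right:
  assumes "A_module act"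
  shows "act a (sum f F) = (\<Sum>x\<in>F. act a (f x))"
  by (induction F rule: infinite_finite_induct) (simp_all add: assms A_moduleD(2) A_module_act_zero)

lemma left_ideal_gen_eq_ideal_mult: "left_ideal_gen J = ideal_mult UNIV J"
  unfolding left_ideal_gen_def ideal_mult_def by simp

lemma ideal_multE:
  assumes "x \<in> ideal_mult I J"
  obtains n :: nat and a b where "x = (\<Sum>i<n. a i * b i)" and "\<forall>i<n. a i \<in> I \<and> b i \<in> J"
  using assms unfolding ideal_mult_def by blast

lemma ideal_multI:
  fixes n :: nat
  shows "\<forall>i<n. a i \<in> I \<and> b i \<in> J \<Longrightarrow> (\<Sum>i<n. a i * b i) \<in> ideal_mult I J"
  unfolding ideal_mult_def by blast

lemma ideal_mult_mono: "I \<subseteq> I' \<Longrightarrow> J \<subseteq> J' \<Longrightarrow> ideal_mult I J \<subseteq> ideal_mult I' J'"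
  unfolding ideal_mult_def by blast

lemma zero_mem_ideal_mult: "0 \<in> ideal_mult I J"
  unfolding ideal_mult_def by force

lemma mult_mem_ideal_mult: "x \<in> I \<Longrightarrow> y \<in> J \<Longrightarrow> x * y \<in> ideal_mult I J"
  using ideal_multI[of 1 "\<lambda>_. x" I "\<lambda>_. y" J] by simp

lemma ideal_mult_add:
  assumes "x \<in> ideal_mult I J" and "y \<in> ideal_mult I J"
  shows "x + y \<in> ideal_mult I J"
proof -
  obtain n1 :: nat and x1 y1 where x: "x = (\<Sum>i<n1. x1 i * y1 i)" "\<forall>i<n1. x1 i \<in> I \<and> y1 i \<in> J"
    using assms(1) by (rule ideal_multE)
  obtain n2 :: nat and x2 y2 where y: "y = (\<Sum>i<n2. x2 i * y2 i)" "\<forall>i<n2. x2 i \<in> I \<and> y2 i \<in> J"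
    using assms(2) by (rule ideal_multE)
  define x' where "x' i = (if i < n1 then x1 i else x2 (i - n1))" for i
  define y' where "y' i = (if i < n1 then y1 i else y2 (i - n1))" for i
  have "x + y = (\<Sum>i<n1 + n2. x' i * y' i)"
    unfolding x y x'_def y'_def sum_lessThan_append[symmetric] by (rule sum.cong) auto
  also have "\<dots> \<in> ideal_mult I J"
    by (rule ideal_multI) (use x(2) y(2) in \<open>auto simp: x'_def y'_def\<close>)
  finally show ?thesis .
qed

lemma ideal_mult_diff:
  assumes "x \<in> ideal_mult I J" and "y \<in> ideal_mult I J" and "\<And>a. a \<in> I \<Longrightarrow> - a \<in> I"
  shows "x - y \<in> ideal_mult I J"
proof -
  obtain n :: nat and a b where y: "y = (\<Sum>i<n. a i * b i)" "\<forall>i<n. a i \<in> I \<and> b i \<in> J"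
    using assms(2) by (rule ideal_multE)
  have "- y = (\<Sum>i<n. (- a i) * b i)"
    unfolding y by (simp add: sum_negf)
  also have "\<dots> \<in> ideal_mult I J"
    by (rule ideal_multI) (use y(2) assms(3) in auto)
  finally show ?thesis
    using ideal_mult_add[OF assms(1)] by fastforce
qed

lemma ideal_mult_mult_right:
  assumes "x \<in> ideal_mult I J" and "\<And>b. b \<in> J \<Longrightarrow> b * g \<in> J"
  shows "x * g \<in> ideal_mult I J"
proof -
  obtain n :: nat and x1 y1 where x: "x = (\<Sum>i<n. x1 i * y1 i)" "\<forall>i<n. x1 i \<in> I \<and> y1 i \<in> J"
    using assms(1) by (rule ideal_multE)
  have "x * g = (\<Sum>i<n. x1 i * (y1 i * g))"
    unfolding x by (simp add: sum_distrib_right mult.assoc)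
  also have "\<dots> \<in> ideal_mult I J"
    by (rule ideal_multI) (use x(2) assms(2) in auto)
  finally show ?thesis .
qed

lemma ideal_mult_subset:
  assumes "0 \<in> M" and "\<And>x y. x \<in> M \<Longrightarrow> y \<in> M \<Longrightarrow> x + y \<in> M"
    and "\<And>x y. x \<in> I \<Longrightarrow> y \<in> J \<Longrightarrow> x * y \<in> M"
  shows "ideal_mult I J \<subseteq> M"
  unfolding ideal_mult_def using assms by (auto intro!: sum_mem_closed)

lemma act_ideal_mult_eq_0:
  assumes "A_module act" and "\<forall>y\<in>J. act y v = 0" and "x \<in> ideal_mult I J"
  shows "act x v = 0"
proof -
  obtain n :: nat and x1 y1 where x: "x = (\<Sum>i<n. x1 i * y1 i)" "\<forall>i<n. x1 i \<in> I \<and> y1 i \<in> J"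
    using assms(3) by (rule ideal_multE)
  show ?thesis
    unfolding x using x(2) assms(2)
    by (simp add: A_module_act_sum_left A_moduleD(3) A_module_act_zero assms(1))
qed

definition right_ideal :: "'a::ring_1 set \<Rightarrow> 'a set \<Rightarrow> bool" where
  "right_ideal G I \<longleftrightarrow> I \<subseteq> G \<and> 0 \<in> I \<and>
     (\<forall>x\<in>I. \<forall>y\<in>I. x + y \<in> I \<and> x - y \<in> I) \<and> (\<forall>g\<in>G. \<forall>x\<in>I. x * g \<in> I)"

lemma two_sided_ideal_subset: "two_sided_ideal G m \<Longrightarrow> m \<subseteq> G"
  by (simp add: two_sided_ideal_def)

lemma right_ideal_subset: "right_ideal G I \<Longrightarrow> I \<subseteq> G"
  by (simp add: right_ideal_def)

lemma subalgebra_right_ideal: "subalgebra scale G \<Longrightarrow> right_ideal G G"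
  unfolding subalgebra_def right_ideal_def by blast

lemma ideal_mult_subset_left:
  assumes "right_ideal G I" and "J \<subseteq> G"
  shows "ideal_mult I J \<subseteq> I"
  using assms unfolding right_ideal_def by (intro ideal_mult_subset) blast+

lemma ideal_mult_subset_right:
  assumes "two_sided_ideal G m" and "I \<subseteq> G"
  shows "ideal_mult I m \<subseteq> m"
  using assms unfolding two_sided_ideal_def by (intro ideal_mult_subset) blast+

lemma right_ideal_ideal_mult:
  assumes I: "right_ideal G I" and m: "two_sided_ideal G m"
  shows "right_ideal G (ideal_mult I m)"
proof -
  have "ideal_mult I m \<subseteq> G"
    using ideal_mult_subset_left[OF I two_sided_ideal_subset[OF m]] right_ideal_subset[OF I]
    by blast
  moreover have "- a \<in> I" if "a \<in> I" for a
    using I that unfolding right_ideal_def by (metis diff_0)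
  ultimately show ?thesis
    using m unfolding right_ideal_def two_sided_ideal_def
    by (simp add: zero_mem_ideal_mult ideal_mult_add ideal_mult_diff ideal_mult_mult_right)
qed

lemma words_right_ideal:
  assumes "subalgebra scale G" and "\<forall>m\<in>B. two_sided_ideal G m" and "W \<in> words G B"
  shows "right_ideal G W"
  using assms(3)
proof induction
  case words_unit
  show ?case
    using assms(1) by (rule subalgebra_right_ideal)
next
  case (words_step I m)
  then show ?case
    using assms(2) right_ideal_ideal_mult by blast
qed

lemma words_common_lower_bound:
  assumes sub: "subalgebra scale G" and B: "\<forall>m\<in>B. two_sided_ideal G m"
    and I: "I \<in> words G B" and J: "J \<in> words G B"
  shows "\<exists>K\<in>words G B. K \<subseteq> I \<and> K \<subseteq> J"
  using J
proof induction
  case words_unit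
  have "I \<subseteq> G"
    using words_right_ideal[OF sub B I] by (rule right_ideal_subset)
  with I show ?case
    by (intro bexI[of _ I]) simp_all
next
  case (words_step J' m)
  obtain K where K: "K \<in> words G B" "K \<subseteq> I" "K \<subseteq> J'"
    using words_step.IH by blast
  have "m \<subseteq> G"
    using B words_step.hyps(2) two_sided_ideal_subset by blast
  then have "ideal_mult K m \<subseteq> K"
    by (rule ideal_mult_subset_left[OF words_right_ideal[OF sub B K(1)]])
  moreover have "ideal_mult K m \<subseteq> ideal_mult J' m"
    using K(3) by (rule ideal_mult_mono) simp
  moreover have "ideal_mult K m \<in> words G B"
    using K(1) words_step.hyps(2) by (rule words.words_step)
  ultimately show ?case
    using K(2) by blast
qed

lemma mem_block_part_zero_iff:
  "v \<in> block_part act {0} G B \<longleftrightarrow> (\<exists>J\<in>words G B. \<forall>g\<in>J. act g v = 0)"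
  unfolding block_part_def by simp

lemma zero_mem_block_part:
  assumes "A_module act"
  shows "0 \<in> block_part act {0} G B"
  unfolding mem_block_part_zero_iff using A_module_act_zero(2)[OF assms] words.words_unit by blast

lemma block_part_add:
  assumes am: "A_module act" and sub: "subalgebra scale G" and B: "\<forall>m\<in>B. two_sided_ideal G m"
    and u: "u \<in> block_part act {0} G B" and w: "w \<in> block_part act {0} G B"
  shows "u + w \<in> block_part act {0} G B"
proof -
  obtain I where I: "I \<in> words G B" "\<forall>g\<in>I. act g u = 0"
    using u unfolding mem_block_part_zero_iff by blast
  obtain J where J: "J \<in> words G B" "\<forall>g\<in>J. act g w = 0"
    using w unfolding mem_block_part_zero_iff by blast
  obtain K where K: "K \<in> words G B" "K \<subseteq> I" "K \<subseteq> J"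
    using words_common_lower_bound[OF sub B I(1) J(1)] by blast
  have "\<forall>g\<in>K. act g (u + w) = 0"
    using I(2) J(2) K(2,3) by (auto simp: A_moduleD(2)[OF am] subset_iff)
  then show ?thesis
    using K(1) unfolding mem_block_part_zero_iff by blast
qed

lemma block_sumI:
  "finite F \<Longrightarrow> F \<subseteq> X \<Longrightarrow> (\<And>B. B \<in> F \<Longrightarrow> f B \<in> block_part act N G B)
    \<Longrightarrow> sum f F \<in> block_sum act N G X"
  unfolding block_sum_def by blast

lemma block_sumE:
  assumes "x \<in> block_sum act N G X"
  obtains f F where "x = sum f F" and "finite F" and "F \<subseteq> X"
    and "\<forall>B\<in>F. f B \<in> block_part act N G B"
  using assms unfolding block_sum_def by blast

lemma zero_mem_block_sum: "0 \<in> block_sum act N G X"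
  unfolding block_sum_def by force

lemma block_part_subset_block_sum: "C \<in> X \<Longrightarrow> block_part act N G C \<subseteq> block_sum act N G X"
  unfolding block_sum_def by (force intro: exI[of _ "{C}"])

lemma block_sum_mono: "X \<subseteq> Y \<Longrightarrow> block_sum act N G X \<subseteq> block_sum act N G Y"
  unfolding block_sum_def by blast

lemma block_sum_add:
  assumes am: "A_module act" and sub: "subalgebra scale G" and X: "\<forall>B\<in>X. \<forall>m\<in>B. two_sided_ideal G m"
    and x: "x \<in> block_sum act {0} G X" and y: "y \<in> block_sum act {0} G X"
  shows "x + y \<in> block_sum act {0} G X"
proof -
  obtain F1 f1 where F1: "x = sum f1 F1" "finite F1" "F1 \<subseteq> X"
    and f1: "\<forall>B\<in>F1. f1 B \<in> block_part act {0} G B"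
    using x by (rule block_sumE)
  obtain F2 f2 where F2: "y = sum f2 F2" "finite F2" "F2 \<subseteq> X"
    and f2: "\<forall>B\<in>F2. f2 B \<in> block_part act {0} G B"
    using y by (rule block_sumE)
  define g1 where "g1 B = (if B \<in> F1 then f1 B else 0)" for B
  define g2 where "g2 B = (if B \<in> F2 then f2 B else 0)" for B
  have "x = sum g1 (F1 \<union> F2)" "y = sum g2 (F1 \<union> F2)"
    unfolding F1(1) F2(1) g1_def g2_def using F1(2) F2(2)
    by (simp_all add: sum.If_cases Int_absorb2)
  then have "x + y = (\<Sum>B\<in>F1 \<union> F2. g1 B + g2 B)"
    by (simp add: sum.distrib)
  moreover have "g1 B + g2 B \<in> block_part act {0} G B" if "B \<in> F1 \<union> F2" for B
  proof -
    have "\<forall>m\<in>B. two_sided_ideal G m"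
      using that F1(3) F2(3) X by blast
    moreover have "g1 B \<in> block_part act {0} G B" "g2 B \<in> block_part act {0} G B"
      using f1 f2 zero_mem_block_part[OF am] unfolding g1_def g2_def by auto
    ultimately show ?thesis
      using block_part_add[OF am sub] by blast
  qed
  ultimately show ?thesis
    using F1(2,3) F2(2,3) block_sumI[of "F1 \<union> F2" X "\<lambda>B. g1 B + g2 B"] by simp
qed

lemma block_sum_sum:
  assumes "A_module act" and "subalgebra scale G" and "\<forall>B\<in>X. \<forall>m\<in>B. two_sided_ideal G m"
    and "\<And>i. i \<in> F \<Longrightarrow> t i \<in> block_sum act {0} G X"
  shows "sum t F \<in> block_sum act {0} G X"
  using assms by (intro sum_mem_closed zero_mem_block_sum block_sum_add)

lemma classes_two_sided_ideal:
  assumes "equiv (cfs scale G) R" and "C \<in> classes scale G R" and "m \<in> C"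
  shows "two_sided_ideal G m"
  using assms in_quotient_imp_subset unfolding classes_def cfs_def by blast

lemma block_part_mono: "N \<subseteq> N' \<Longrightarrow> block_part act N G C \<subseteq> block_part act N' G C"
  unfolding block_part_def by blast

lemma block_part_subset_if_notin_Supp:
  "C \<in> Cl \<Longrightarrow> C \<notin> Supp act N G Cl \<Longrightarrow> block_part act N G C \<subseteq> N"
  unfolding Supp_def by blast

lemma prec_if_mem_Supp:
  assumes "B \<in> classes scale G R" and "C \<in> classes scale G R" and "m \<in> B"
    and "C \<in> Supp (*) (left_ideal_gen m) G (classes scale G R)"
  shows "(B, C) \<in> prec scale G R"
  unfolding prec_def by (rule r_into_rtrancl) (use assms in \<open>auto simp: prec_step_def\<close>)

lemma act_block_part_if_annihilated:
  assumes am: "A_module act" and J: "\<forall>g\<in>J. act g v = 0"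
    and f: "f \<in> block_part (*) (left_ideal_gen J) G C"
  shows "act f v \<in> block_part act {0} G C"
proof -
  obtain W where W: "W \<in> words G C" "\<forall>g\<in>W. g * f \<in> left_ideal_gen J"
    using f unfolding block_part_def by blast
  have "act g (act f v) = 0" if "g \<in> W" for g
  proof -
    have "act g (act f v) = act (g * f) v"
      by (simp add: A_moduleD(3)[OF am])
    also have "\<dots> = 0"
      using act_ideal_mult_eq_0[OF am J] W(2) that unfolding left_ideal_gen_eq_ideal_mult by blast
    finally show ?thesis .
  qed
  then show ?thesis
    using W(1) unfolding mem_block_part_zero_iff by blast
qed

lemma act_left_ideal_gen_closed:
  assumes am: "A_module act" and f: "f \<in> left_ideal_gen m"
    and "0 \<in> S" and "\<And>x y. x \<in> S \<Longrightarrow> y \<in> S \<Longrightarrow> x + y \<in> S"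
    and m: "\<And>b x. x \<in> m \<Longrightarrow> act b (act x v) \<in> S"
  shows "act f v \<in> S"
proof -
  obtain n :: nat and b x where f: "f = (\<Sum>i<n. b i * x i)" and x: "\<forall>i<n. b i \<in> UNIV \<and> x i \<in> m"
    using f unfolding left_ideal_gen_eq_ideal_mult by (rule ideal_multE)
  have "act f v = (\<Sum>i<n. act (b i) (act (x i) v))"
    unfolding f by (simp add: A_module_act_sum_left[OF am] A_moduleD(3)[OF am])
  also have "\<dots> \<in> S"
    using assms(3,4) m x by (intro sum_mem_closed) auto
  finally show ?thesis .
qed

lemma act_block_component_mem_block_sum_prec:
  assumes am: "A_module act" and sub: "subalgebra scale G" and eq: "equiv (cfs scale G) R"
    and Bc: "B \<in> classes scale G R" and I: "I \<in> words G B" and m: "m \<in> B"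
    and IH: "\<And>u b. \<forall>g\<in>I. act g u = 0 \<Longrightarrow>
      act b u \<in> block_sum act {0} G {C \<in> classes scale G R. (B, C) \<in> prec scale G R}"
    and v: "\<forall>g\<in>ideal_mult I m. act g v = 0"
    and C: "C \<in> classes scale G R" and f: "f \<in> block_part (*) (left_ideal_gen (ideal_mult I m)) G C"
  shows "act f v \<in> block_sum act {0} G {C \<in> classes scale G R. (B, C) \<in> prec scale G R}"
    (is "_ \<in> ?S")
proof (cases "C \<in> Supp (*) (left_ideal_gen m) G (classes scale G R)")
  case True
  have "C \<in> {C \<in> classes scale G R. (B, C) \<in> prec scale G R}"
    using C prec_if_mem_Supp[OF Bc C m True] by blast
  moreover have "act f v \<in> block_part act {0} G C"
    by (rule act_block_part_if_annihilated[OF am v f])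
  ultimately show ?thesis
    by (rule subsetD[OF block_part_subset_block_sum])
next
  case False
  have B_ideals: "\<forall>m\<in>B. two_sided_ideal G m"
    using classes_two_sided_ideal[OF eq Bc] by blast
  have "I \<subseteq> G"
    using words_right_ideal[OF sub B_ideals I] by (rule right_ideal_subset)
  then have "ideal_mult I m \<subseteq> m"
    using B_ideals m ideal_mult_subset_right by blast
  then have "left_ideal_gen (ideal_mult I m) \<subseteq> left_ideal_gen m"
    unfolding left_ideal_gen_eq_ideal_mult by (rule ideal_mult_mono[OF subset_refl])
  then have "f \<in> left_ideal_gen m"
    using block_part_mono block_part_subset_if_notin_Supp[OF C False] f by blast
  then show ?thesis
  proof (rule act_left_ideal_gen_closed[OF am])
    show "0 \<in> ?S"
      by (rule zero_mem_block_sum)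
    have "\<forall>C\<in>{C \<in> classes scale G R. (B, C) \<in> prec scale G R}. \<forall>m\<in>C. two_sided_ideal G m"
      using classes_two_sided_ideal[OF eq] by blast
    then show "\<And>x y. x \<in> ?S \<Longrightarrow> y \<in> ?S \<Longrightarrow> x + y \<in> ?S"
      by (rule block_sum_add[OF am sub])
    fix b x assume "x \<in> m"
    have "\<forall>g\<in>I. act g (act x v) = 0"
    proof
      fix g assume "g \<in> I"
      have "act g (act x v) = act (g * x) v"
        by (simp add: A_moduleD(3)[OF am])
      also have "\<dots> = 0"
        using v mult_mem_ideal_mult[OF \<open>g \<in> I\<close> \<open>x \<in> m\<close>] by blast
      finally show "act g (act x v) = 0" .
    qed
    then show "act b (act x v) \<in> ?S"
      by (rule IH)
  qed
qed

lemma act_mem_block_sum_prec_if_annihilated: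
  assumes am: "A_module act" and sub: "subalgebra scale G" and eq: "equiv (cfs scale G) R"
    and hc: "HC_block_subalgebra scale G R" and Bc: "B \<in> classes scale G R"
    and "J \<in> words G B" and "\<forall>g\<in>J. act g v = 0"
  shows "act a v \<in> block_sum act {0} G {C \<in> classes scale G R. (B, C) \<in> prec scale G R}"
    (is "_ \<in> block_sum _ _ _ ?succ")
  using assms(6,7)
proof (induction arbitrary: v a)
  case words_unit
  have "1 \<in> G"
    using sub by (simp add: subalgebra_def)
  then have "v = 0"
    using words_unit A_moduleD(4)[OF am, of v] by simp
  then show ?case
    using zero_mem_block_sum A_module_act_zero(2)[OF am] by simp
next
  case (words_step I m)
  let ?Cl = "classes scale G R"
  let ?AJ = "left_ideal_gen (ideal_mult I m)"
  have "ideal_mult I m \<in> words G B"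
    using words_step.hyps by (rule words.words_step)
  then have "block_module (*) ?AJ G ?Cl"
    using hc Bc unfolding HC_block_subalgebra_def by blast
  then obtain w where w: "w \<in> block_sum (*) ?AJ G ?Cl" and "a - w \<in> ?AJ"
    unfolding block_module_def by blast
  obtain f F where F: "w = sum f F" "finite F" "F \<subseteq> ?Cl"
    and f: "\<forall>C\<in>F. f C \<in> block_part (*) ?AJ G C"
    using w by (rule block_sumE)
  have "act (a - w) v = 0"
    using act_ideal_mult_eq_0[OF am words_step.prems] \<open>a - w \<in> ?AJ\<close>
    unfolding left_ideal_gen_eq_ideal_mult by blast
  then have "act a v = (\<Sum>C\<in>F. act (f C) v)"
    by (simp add: A_module_act_diff[OF am] A_module_act_sum_left[OF am] F(1))
  also have "\<dots> \<in> block_sum act {0} G ?succ"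
  proof (rule block_sum_sum[OF am sub])
    show "\<forall>C\<in>?succ. \<forall>m\<in>C. two_sided_ideal G m"
      using classes_two_sided_ideal[OF eq] by blast
    fix C assume "C \<in> F"
    then show "act (f C) v \<in> block_sum act {0} G ?succ"
      using F(3) f act_block_component_mem_block_sum_prec[OF am sub eq Bc words_step.hyps
          words_step.IH words_step.prems]
      by blast
  qed
  finally show ?case .
qed

theorem mainTheorem4:
  fixes scale :: "'k::field \<Rightarrow> 'a::ring_1 \<Rightarrow> 'a"
    and G :: "'a set"
    and R :: "('a set \<times> 'a set) set"
    and act :: "'a \<Rightarrow> 'v::ab_group_add \<Rightarrow> 'v"
    and D :: "'a set set set"
  assumes "k_algebra scale"
    and "subalgebra scale G"
    and "equiv (cfs scale G) R"
    and "HC_block_subalgebra scale G R"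
    and "A_module act"
    and "D \<subseteq> classes scale G R"
  shows "{act a v | a v. v \<in> block_sum act {0} G D}
           \<subseteq> block_sum act {0} G {C \<in> classes scale G R. \<exists>B\<in>D. (B, C) \<in> prec scale G R}"
proof
  let ?X = "{C \<in> classes scale G R. \<exists>B\<in>D. (B, C) \<in> prec scale G R}"
  fix z assume "z \<in> {act a v | a v. v \<in> block_sum act {0} G D}"
  then obtain a v where z: "z = act a v" and v: "v \<in> block_sum act {0} G D"
    by blast
  obtain f F where F: "v = sum f F" "finite F" "F \<subseteq> D"
    and f: "\<forall>B\<in>F. f B \<in> block_part act {0} G B"
    using v by (rule block_sumE)
  have X_ideals: "\<forall>C\<in>?X. \<forall>m\<in>C. two_sided_ideal G m"
    using classes_two_sided_ideal[OF assms(3)] by blast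
  have "act a (f B) \<in> block_sum act {0} G ?X" if "B \<in> F" for B
  proof -
    have B: "B \<in> classes scale G R"
      using that F(3) assms(6) by blast
    have "f B \<in> block_part act {0} G B"
      using f that by blast
    then obtain J where J: "J \<in> words G B" "\<forall>g\<in>J. act g (f B) = 0"
      unfolding mem_block_part_zero_iff by blast
    have "act a (f B) \<in> block_sum act {0} G {C \<in> classes scale G R. (B, C) \<in> prec scale G R}"
      by (rule act_mem_block_sum_prec_if_annihilated[OF assms(5,2,3,4) B J])
    also have "\<dots> \<subseteq> block_sum act {0} G ?X"
      using that F(3) by (intro block_sum_mono) blast
    finally show ?thesis .
  qed
  then have "(\<Sum>B\<in>F. act a (f B)) \<in> block_sum act {0} G ?X"
    by (rule block_sum_sum[OF assms(5,2) X_ideals])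
  then show "z \<in> block_sum act {0} G ?X"
    unfolding z F(1) A_module_act_sum_right[OF assms(5)] .
qed

end
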